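(* Let $G=(V,E)$ be a naturally ordered DAG. For every finite set $f_1,\dots,f_r\in\mathbb R[\Sigma]$ there exist $s\in S_G$ and $h_1,\dots,h_r\in\mathbb R[\Sigma_E]$ such that $sf_i-h_i\in I_G$ for $i=1,\dots,r$.
   Context: $\mathbb R[\Sigma]$ is the polynomial ring in symmetric variables $\sigma_{ij}=\sigma_{ji}$, $i,j\in V=[p]$; $\mathbb R[\Sigma_E]\subseteq\mathbb R[\Sigma]$ is the subring generated by $\sigma_{ii}$ ($i\in V$) and $\sigma_{ij}$ ($ij\in E$). $G$ naturally ordered means $ij\in E\Rightarrow i<j$. $I_G$ is the ideal generated by $|\Sigma_{ij|\mathrm{pa}(j)}|$ for $i<j$ with $ij\notin E$, where $\Sigma_{ij|K}$ has rows $(i,K)$ and columns $(j,K)$. $S_G$ is the multiplicatively closed set $\{\prod_{i\in V}|\Sigma_{\mathrm{pa}(i)}|^{k_i}:k_i\in\mathbb N\}$. *)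

theory Defs
  imports Complex_Main "HOL-Library.Poly_Mapping" "HOL-Combinatorics.Permutations"
begin

text \<open>Real polynomials in commuting variables indexed by pairs of natural numbers.
  The symmetric variable sigma_ij = sigma_ji is the variable indexed by (min i j, max i j).\<close>

type_synonym rpoly = "((nat \<times> nat) \<Rightarrow>\<^sub>0 nat) \<Rightarrow>\<^sub>0 real"

definition pvar :: "nat \<times> nat \<Rightarrow> rpoly" where
  "pvar v = Poly_Mapping.single (Poly_Mapping.single v 1) 1"

definition sigma :: "nat \<Rightarrow> nat \<Rightarrow> rpoly" where
  "sigma i j = pvar (min i j, max i j)"

definition pvars :: "rpoly \<Rightarrow> (nat \<times> nat) set" where
  "pvars f = (\<Union>m\<in>Poly_Mapping.keys f. Poly_Mapping.keys m)"

definition RSigma :: "nat \<Rightarrow> rpoly set" where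
  "RSigma p = {f. pvars f \<subseteq> {(i,j). 1 \<le> i \<and> i \<le> j \<and> j \<le> p}}"

text \<open>R[Sigma_E]: generated by sigma_ii (i in V) and sigma_ij (ij in E, stored as (i,j) with i<j).\<close>
definition RSigmaE :: "nat \<Rightarrow> (nat \<times> nat) set \<Rightarrow> rpoly set" where
  "RSigmaE p E = {f. pvars f \<subseteq> {(i,i) | i. 1 \<le> i \<and> i \<le> p} \<union> E}"

definition detl :: "nat list \<Rightarrow> nat list \<Rightarrow> rpoly" where
  "detl rs cs = (\<Sum>q | q permutes {..<length rs}.
      of_int (sign q) * (\<Prod>a<length rs. sigma (rs ! a) (cs ! (q a))))"

definition pa :: "(nat \<times> nat) set \<Rightarrow> nat \<Rightarrow> nat list" where
  "pa E j = sorted_list_of_set {i. (i, j) \<in> E}"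

definition cond_minor :: "nat \<Rightarrow> nat \<Rightarrow> nat list \<Rightarrow> rpoly" where
  "cond_minor i j K = detl (i # K) (j # K)"

definition ideal_gen :: "rpoly set \<Rightarrow> rpoly set \<Rightarrow> rpoly set" where
  "ideal_gen R B = {f. \<exists>F c. finite F \<and> F \<subseteq> B \<and> (\<forall>b\<in>F. c b \<in> R) \<and> f = (\<Sum>b\<in>F. c b * b)}"

definition I_G :: "nat \<Rightarrow> (nat \<times> nat) set \<Rightarrow> rpoly set" where
  "I_G p E = ideal_gen (RSigma p) {cond_minor i j (pa E j) | i j.
      1 \<le> i \<and> i < j \<and> j \<le> p \<and> (i, j) \<notin> E}"

definition S_G :: "nat \<Rightarrow> (nat \<times> nat) set \<Rightarrow> rpoly set" where
  "S_G p E = {(\<Prod>i\<in>{1..p}. detl (pa E i) (pa E i) ^ k i) | k. True}"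

definition naturally_ordered_dag :: "nat \<Rightarrow> (nat \<times> nat) set \<Rightarrow> bool" where
  "naturally_ordered_dag p E \<longleftrightarrow> E \<subseteq> {1..p} \<times> {1..p} \<and> (\<forall>(i,j)\<in>E. i < j)"

end

theory Submission
  imports Defs Jordan_Normal_Form.Determinant
begin

text \<open>Say a polynomial has level n if it only involves the variables \<sigma>(a,b) with a \<le> b \<le> n,
  the diagonal variables \<sigma>(i,i) and the edge variables \<sigma>(i,j), ij \<in> E. By induction on n,
  every finite family of level n is carried into \<real>[\<Sigma>_E] modulo I_G by one common multiplier
  \<Prod>_{i\<le>n} |\<Sigma>_pa(i)|^k(i). The variables new at level n+1 are the \<sigma>(a,n+1) with
  a < n+1 and a \<rightarrow> n+1 not an edge. Laplace expansion of the generator |\<Sigma>_{a,n+1|pa(n+1)}|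
  along its first row gives \<sigma>(a,n+1) |\<Sigma>_pa(n+1)| \<equiv> -R modulo I_G with R of level n: the
  parents of n+1 are smaller than n+1, and \<sigma>(k,n+1) is an edge variable for every parent k.
  Hence the reducible polynomials of level n+1 form a ring containing all variables. Multipliers
  of level n+1 are themselves of level n, so the cross terms that arise when multipliers are
  combined can be reduced by the induction hypothesis; this is why the induction carries finite
  families.\<close>

lemma pvars_zero [simp]: "pvars 0 = {}"
  by (simp add: pvars_def)

lemma pvars_add: "pvars (f + g) \<subseteq> pvars f \<union> pvars g"
  unfolding pvars_def using keys_add[of f g] by blast

lemma pvars_uminus [simp]: "pvars (- f) = pvars f"
  unfolding pvars_def by simp

lemma pvars_mult: "pvars (f * g) \<subseteq> pvars f \<union> pvars g"
proof
  fix v assume "v \<in> pvars (f * g)"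
  then obtain m where m: "m \<in> Poly_Mapping.keys (f * g)" "v \<in> Poly_Mapping.keys m"
    unfolding pvars_def by blast
  then obtain a b where ab: "m = a + b" "a \<in> Poly_Mapping.keys f" "b \<in> Poly_Mapping.keys g"
    using keys_mult[of f g] by blast
  then have "v \<in> Poly_Mapping.keys a \<union> Poly_Mapping.keys b"
    using m(2) keys_add[of a b] by blast
  with ab show "v \<in> pvars f \<union> pvars g"
    unfolding pvars_def by blast
qed

lemma pvars_single_0 [simp]: "pvars (Poly_Mapping.single 0 c) = {}"
  unfolding pvars_def by simp

lemma pvars_of_int [simp]: "pvars (of_int c :: rpoly) = {}"
proof -
  have "pvars (of_nat n :: rpoly) = {}" for n
    by (metis pvars_single_0 single_of_nat)
  then show ?thesis
    by (cases c rule: int_cases) (auto simp del: of_nat_Suc)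
qed

lemma pvars_pvar: "pvars (pvar v) \<subseteq> {v}"
  unfolding pvars_def pvar_def by simp

definition polys_in :: "(nat \<times> nat) set \<Rightarrow> rpoly set" where
  "polys_in V = {f. pvars f \<subseteq> V}"

lemma polys_in_add: "f \<in> polys_in V \<Longrightarrow> g \<in> polys_in V \<Longrightarrow> f + g \<in> polys_in V"
  unfolding polys_in_def using pvars_add by blast

lemma polys_in_mult: "f \<in> polys_in V \<Longrightarrow> g \<in> polys_in V \<Longrightarrow> f * g \<in> polys_in V"
  unfolding polys_in_def using pvars_mult by blast

lemma polys_in_uminus: "f \<in> polys_in V \<Longrightarrow> - f \<in> polys_in V"
  unfolding polys_in_def by simp

lemma polys_in_single_0 [simp]: "Poly_Mapping.single 0 c \<in> polys_in V"
  unfolding polys_in_def by simp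

lemma polys_in_of_int [simp]: "of_int c \<in> polys_in V"
  unfolding polys_in_def by simp

lemma polys_in_zero [simp]: "0 \<in> polys_in V"
  unfolding polys_in_def by simp

lemma polys_in_one [simp]: "1 \<in> polys_in V"
  unfolding polys_in_def by (simp flip: single_one)

lemma polys_in_pvar: "v \<in> V \<Longrightarrow> pvar v \<in> polys_in V"
  unfolding polys_in_def using pvars_pvar by blast

lemma polys_in_mono: "V \<subseteq> U \<Longrightarrow> polys_in V \<subseteq> polys_in U"
  unfolding polys_in_def by blast

lemma polys_in_power: "f \<in> polys_in V \<Longrightarrow> f ^ k \<in> polys_in V"
  by (induct k) (auto intro: polys_in_mult)

lemma polys_in_sum: "(\<And>x. x \<in> A \<Longrightarrow> g x \<in> polys_in V) \<Longrightarrow> sum g A \<in> polys_in V"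
  by (induct A rule: infinite_finite_induct) (auto intro: polys_in_add)

lemma polys_in_prod: "(\<And>x. x \<in> A \<Longrightarrow> g x \<in> polys_in V) \<Longrightarrow> prod g A \<in> polys_in V"
  by (induct A rule: infinite_finite_induct) (auto intro: polys_in_mult)

lemma pvar_power: "pvar v ^ k = Poly_Mapping.single (Poly_Mapping.single v k) 1"
proof (induct k)
  case (Suc k)
  then have "pvar v ^ Suc k = Poly_Mapping.single (Poly_Mapping.single v k) 1 * pvar v"
    by (simp add: mult.commute)
  then show ?case
    unfolding pvar_def mult_single by (simp add: single_add[symmetric])
qed simp

lemma update_fresh_eq_add:
  "a \<notin> Poly_Mapping.keys f \<Longrightarrow> Poly_Mapping.update a b f = f + Poly_Mapping.single a b"
  by (rule poly_mapping_eqI)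
    (auto simp: lookup_update lookup_add lookup_single in_keys_iff when_def)

lemma single_update_fresh:
  "a \<notin> Poly_Mapping.keys m \<Longrightarrow>
    Poly_Mapping.single (Poly_Mapping.update a k m) c = Poly_Mapping.single m c * pvar a ^ k"
  by (simp add: update_fresh_eq_add pvar_power mult_single)

lemma polys_in_induct [consumes 1, case_names const var add mult]:
  assumes f: "f \<in> polys_in V"
    and const: "\<And>c. Q (Poly_Mapping.single 0 c)"
    and var: "\<And>v. v \<in> V \<Longrightarrow> Q (pvar v)"
    and add: "\<And>a b. Q a \<Longrightarrow> Q b \<Longrightarrow> a \<in> polys_in V \<Longrightarrow> b \<in> polys_in V \<Longrightarrow> Q (a + b)"
    and mult: "\<And>a b. Q a \<Longrightarrow> Q b \<Longrightarrow> a \<in> polys_in V \<Longrightarrow> b \<in> polys_in V \<Longrightarrow> Q (a * b)"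
  shows "Q f"
proof -
  have power: "Q (pvar v ^ k) \<and> pvar v ^ k \<in> polys_in V" if "v \<in> V" for v k
  proof (induct k)
    case 0
    show ?case using const[of 1] by (simp flip: single_one)
  next
    case (Suc k)
    then show ?case
      using that var[of v] mult[of "pvar v ^ k" "pvar v"] polys_in_pvar[of v V]
      by (simp add: mult.commute polys_in_mult)
  qed
  have monomial: "Q (Poly_Mapping.single m c) \<and> Poly_Mapping.single m c \<in> polys_in V"
    if "Poly_Mapping.keys m \<subseteq> V" for m c
    using that
  proof (induct m rule: update_induct)
    case const
    then show ?case using assms(2) by simp
  next
    case (update m a k)
    then have "Poly_Mapping.keys m \<subseteq> V" "a \<in> V"
      by (auto simp: keys_update)
    with update(3) power have "Q (Poly_Mapping.single m c)" "Poly_Mapping.single m c \<in> polys_in V"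
      "Q (pvar a ^ k)" "pvar a ^ k \<in> polys_in V"
      by blast+
    then show ?case
      unfolding single_update_fresh[OF update(1)] by (blast intro: mult polys_in_mult)
  qed
  from f have "pvars f \<subseteq> V"
    unfolding polys_in_def by simp
  then show ?thesis
  proof (induct f rule: update_induct)
    case const
    then show ?case using assms(2)[of 0] by simp
  next
    case (update g m c)
    then have "pvars g \<subseteq> V" "Poly_Mapping.keys m \<subseteq> V"
      unfolding pvars_def by (auto simp: keys_update)
    with update(3) monomial have "Q g" "Q (Poly_Mapping.single m c)"
      "g \<in> polys_in V" "Poly_Mapping.single m c \<in> polys_in V"
      unfolding polys_in_def by blast+
    then show ?case
      unfolding update_fresh_eq_add[OF update(1)] by (rule add)
  qed
qed

definition sym_var :: "nat \<Rightarrow> nat \<Rightarrow> nat \<times> nat" where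
  "sym_var a b = (min a b, max a b)"

lemma polys_in_sigma: "sym_var a b \<in> V \<Longrightarrow> sigma a b \<in> polys_in V"
  unfolding sigma_def sym_var_def by (rule polys_in_pvar)

lemma polys_in_det:
  "(\<And>a b. a < dim_row A \<Longrightarrow> b < dim_col A \<Longrightarrow> A $$ (a, b) \<in> polys_in V) \<Longrightarrow>
    det A \<in> polys_in V"
  unfolding det_def
  by (auto intro!: polys_in_sum polys_in_mult polys_in_prod simp: permutes_in_image)

lemma detl_eq_det:
  "detl rs cs = det (mat (length rs) (length rs) (\<lambda>(a, b). sigma (rs ! a) (cs ! b)))"
proof -
  let ?n = "length rs" and ?A = "mat (length rs) (length rs) (\<lambda>(a, b). sigma (rs ! a) (cs ! b))"
  have "det ?A = (\<Sum>q\<in>{q. q permutes {0..<?n}}. signof q * (\<Prod>a=0..<?n. ?A $$ (a, q a)))"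
    by (rule det_def') simp
  also have "\<dots> = (\<Sum>q\<in>{q. q permutes {..<?n}}. signof q * (\<Prod>a<?n. sigma (rs ! a) (cs ! q a)))"
    by (rule sum.cong) (auto simp: atLeast0LessThan permutes_in_image intro!: prod.cong)
  finally show ?thesis
    unfolding detl_def by simp
qed

lemma detl_in_polys_in:
  "length cs = length rs \<Longrightarrow> (\<And>x y. x \<in> set rs \<Longrightarrow> y \<in> set cs \<Longrightarrow> sym_var x y \<in> V) \<Longrightarrow>
    detl rs cs \<in> polys_in V"
  unfolding detl_eq_det by (rule polys_in_det) (auto intro!: polys_in_sigma)

lemma cond_minor_expansion:
  "\<exists>R. cond_minor i j K = sigma i j * detl K K + R \<and>
     R \<in> polys_in ({sym_var i k | k. k \<in> set K} \<union> {sym_var k c | k c. k \<in> set K \<and> c \<in> set (j # K)})"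
proof -
  define n where "n = length K"
  define Z where "Z = {sym_var i k | k. k \<in> set K} \<union> {sym_var k c | k c. k \<in> set K \<and> c \<in> set (j # K)}"
  define A where "A = mat (Suc n) (Suc n) (\<lambda>(a, b). sigma ((i # K) ! a) ((j # K) ! b))"
  have "cond_minor i j K = det A"
    unfolding cond_minor_def detl_eq_det A_def n_def by simp
  also have "\<dots> = (\<Sum>b<Suc n. A $$ (0, b) * cofactor A 0 b)"
    by (rule laplace_expansion_row) (simp_all add: A_def)
  also have "\<dots> = A $$ (0, 0) * cofactor A 0 0 + (\<Sum>b<n. A $$ (0, Suc b) * cofactor A 0 (Suc b))"
    by (simp only: sum.lessThan_Suc_shift)
  also have "A $$ (0, 0) * cofactor A 0 0 = sigma i j * detl K K"
  proof -
    have "mat_delete A 0 0 = mat n n (\<lambda>(a, b). sigma (K ! a) (K ! b))"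
      unfolding mat_delete_def A_def by (rule eq_matI) auto
    then show ?thesis
      unfolding cofactor_def detl_eq_det n_def by (simp add: A_def)
  qed
  finally have expansion: "cond_minor i j K =
      sigma i j * detl K K + (\<Sum>b<n. A $$ (0, Suc b) * cofactor A 0 (Suc b))" .
  have "(\<Sum>b<n. A $$ (0, Suc b) * cofactor A 0 (Suc b)) \<in> polys_in Z"
  proof (rule polys_in_sum, rule polys_in_mult)
    fix b assume b: "b \<in> {..<n}"
    then show "A $$ (0, Suc b) \<in> polys_in Z"
      unfolding A_def Z_def n_def by (auto intro!: polys_in_sigma)
    have "det (mat_delete A 0 (Suc b)) \<in> polys_in Z"
    proof (rule polys_in_det)
      fix a c
      assume "a < dim_row (mat_delete A 0 (Suc b))" "c < dim_col (mat_delete A 0 (Suc b))"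
      then have a: "a < n" and c: "c < n"
        unfolding A_def by auto
      define c' where "c' = (if c < Suc b then c else Suc c)"
      have "mat_delete A 0 (Suc b) $$ (a, c) = sigma (K ! a) ((j # K) ! c')"
        unfolding mat_delete_def A_def c'_def using a c by auto
      moreover have "c' < Suc n"
        using c unfolding c'_def by auto
      then have "(j # K) ! c' \<in> set (j # K)"
        unfolding n_def by (metis length_Cons nth_mem)
      moreover have "K ! a \<in> set K"
        using a n_def by simp
      ultimately show "mat_delete A 0 (Suc b) $$ (a, c) \<in> polys_in Z"
        unfolding Z_def by (auto intro!: polys_in_sigma)
    qed
    then show "cofactor A 0 (Suc b) \<in> polys_in Z"
      unfolding cofactor_def by (intro polys_in_mult polys_in_power polys_in_uminus) auto
  qed
  with expansion show ?thesis
    unfolding Z_def by blast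
qed

lemma ideal_gen_zero: "0 \<in> ideal_gen R B"
  unfolding ideal_gen_def by (rule CollectI, rule exI[of _ "{}"]) auto

lemma ideal_gen_generator: "g \<in> B \<Longrightarrow> g \<in> ideal_gen (polys_in V) B"
  unfolding ideal_gen_def
  by (rule CollectI, rule exI[of _ "{g}"], rule exI[of _ "\<lambda>_. 1"]) auto

lemma ideal_gen_add:
  assumes "a \<in> ideal_gen (polys_in V) B" "b \<in> ideal_gen (polys_in V) B"
  shows "a + b \<in> ideal_gen (polys_in V) B"
proof -
  obtain F1 c1 where 1: "finite F1" "F1 \<subseteq> B" "\<forall>x\<in>F1. c1 x \<in> polys_in V" "a = (\<Sum>x\<in>F1. c1 x * x)"
    using assms(1) unfolding ideal_gen_def by blast
  obtain F2 c2 where 2: "finite F2" "F2 \<subseteq> B" "\<forall>x\<in>F2. c2 x \<in> polys_in V" "b = (\<Sum>x\<in>F2. c2 x * x)"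
    using assms(2) unfolding ideal_gen_def by blast
  define c where "c x = (if x \<in> F1 then c1 x else 0) + (if x \<in> F2 then c2 x else 0)" for x
  have "(\<Sum>x\<in>F1 \<union> F2. c x * x) =
      (\<Sum>x\<in>F1 \<union> F2. if x \<in> F1 then c1 x * x else 0) + (\<Sum>x\<in>F1 \<union> F2. if x \<in> F2 then c2 x * x else 0)"
    unfolding sum.distrib[symmetric] by (rule sum.cong) (auto simp: c_def distrib_right)
  also have "\<dots> = a + b"
    unfolding 1(4) 2(4) by (simp add: sum.If_cases 1(1) 2(1) Int_absorb1 Int_absorb2)
  finally have "a + b = (\<Sum>x\<in>F1 \<union> F2. c x * x)" by simp
  moreover have "\<forall>x\<in>F1 \<union> F2. c x \<in> polys_in V"
    unfolding c_def using 1(3) 2(3) by (auto intro: polys_in_add)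
  ultimately show ?thesis
    unfolding ideal_gen_def mem_Collect_eq
    by (intro exI[of _ "F1 \<union> F2"] exI[of _ c]) (use 1 2 in auto)
qed

lemma ideal_gen_mult:
  assumes "a \<in> ideal_gen (polys_in V) B" "c \<in> polys_in V"
  shows "c * a \<in> ideal_gen (polys_in V) B"
proof -
  obtain F c1 where F: "finite F" "F \<subseteq> B" "\<forall>x\<in>F. c1 x \<in> polys_in V" "a = (\<Sum>x\<in>F. c1 x * x)"
    using assms(1) unfolding ideal_gen_def by blast
  have "c * a = (\<Sum>x\<in>F. (c * c1 x) * x)"
    unfolding F(4) by (simp add: sum_distrib_left mult.assoc)
  moreover have "\<forall>x\<in>F. c * c1 x \<in> polys_in V"
    using F(3) assms(2) by (auto intro: polys_in_mult)
  ultimately show ?thesis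
    unfolding ideal_gen_def mem_Collect_eq
    by (intro exI[of _ F] exI[of _ "\<lambda>x. c * c1 x"]) (use F in auto)
qed

lemma ideal_gen_diff:
  assumes "a \<in> ideal_gen (polys_in V) B" "b \<in> ideal_gen (polys_in V) B"
  shows "a - b \<in> ideal_gen (polys_in V) B"
  using ideal_gen_add[OF assms(1) ideal_gen_mult[OF assms(2) polys_in_uminus[OF polys_in_one]]]
  by simp

locale natural_dag =
  fixes p :: nat and E :: "(nat \<times> nat) set"
  assumes naturally_ordered: "naturally_ordered_dag p E"
begin

definition vars_upto :: "nat \<Rightarrow> (nat \<times> nat) set" where
  "vars_upto n = {(a, b). 1 \<le> a \<and> a \<le> b \<and> b \<le> n} \<union> {(i, i) | i. 1 \<le> i \<and> i \<le> p} \<union> E"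

definition pa_minor :: "nat \<Rightarrow> rpoly" where
  "pa_minor i = detl (pa E i) (pa E i)"

definition S_upto :: "nat \<Rightarrow> rpoly set" where
  "S_upto n = {(\<Prod>i\<in>{1..p}. pa_minor i ^ k i) | k. \<forall>i. n < i \<longrightarrow> k i = 0}"

definition jointly_reducible :: "nat \<Rightarrow> rpoly set \<Rightarrow> bool" where
  "jointly_reducible n F \<longleftrightarrow> (\<exists>s\<in>S_upto n. \<forall>f\<in>F. \<exists>h\<in>RSigmaE p E. s * f - h \<in> I_G p E)"

lemma edge_bounds: "(a, b) \<in> E \<Longrightarrow> 1 \<le> a \<and> a < b \<and> b \<le> p"
  using naturally_ordered unfolding naturally_ordered_dag_def by auto

lemma set_pa: "set (pa E j) = {i. (i, j) \<in> E}"
proof -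
  have "{i. (i, j) \<in> E} \<subseteq> {1..p}"
    using edge_bounds by fastforce
  then have "finite {i. (i, j) \<in> E}"
    by (rule finite_subset) simp
  then show ?thesis
    unfolding pa_def by simp
qed

lemma RSigma_eq: "RSigma p = polys_in {(i, j). 1 \<le> i \<and> i \<le> j \<and> j \<le> p}"
  unfolding RSigma_def polys_in_def by simp

lemma RSigmaE_eq_vars_upto_0: "RSigmaE p E = polys_in (vars_upto 0)"
  unfolding RSigmaE_def polys_in_def vars_upto_def by auto

lemma vars_upto_mono: "m \<le> n \<Longrightarrow> polys_in (vars_upto m) \<subseteq> polys_in (vars_upto n)"
  by (rule polys_in_mono) (auto simp: vars_upto_def)

lemma RSigmaE_subset_vars_upto: "RSigmaE p E \<subseteq> polys_in (vars_upto n)"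
  unfolding RSigmaE_eq_vars_upto_0 by (rule vars_upto_mono) simp

lemma RSigma_eq_vars_upto: "RSigma p = polys_in (vars_upto p)"
proof -
  have "vars_upto p = {(i, j). 1 \<le> i \<and> i \<le> j \<and> j \<le> p}"
    using edge_bounds unfolding vars_upto_def by fastforce
  then show ?thesis
    unfolding RSigma_eq by simp
qed

lemma vars_upto_subset_RSigma: "n \<le> p \<Longrightarrow> polys_in (vars_upto n) \<subseteq> RSigma p"
  unfolding RSigma_eq_vars_upto by (rule vars_upto_mono)

lemma I_G_eq:
  "I_G p E = ideal_gen (polys_in (vars_upto p))
     {cond_minor i j (pa E j) | i j. 1 \<le> i \<and> i < j \<and> j \<le> p \<and> (i, j) \<notin> E}"
  unfolding I_G_def RSigma_eq_vars_upto ..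

lemma I_G_add: "a \<in> I_G p E \<Longrightarrow> b \<in> I_G p E \<Longrightarrow> a + b \<in> I_G p E"
  unfolding I_G_eq by (rule ideal_gen_add)

lemma I_G_diff: "a \<in> I_G p E \<Longrightarrow> b \<in> I_G p E \<Longrightarrow> a - b \<in> I_G p E"
  unfolding I_G_eq by (rule ideal_gen_diff)

lemma I_G_mult: "a \<in> I_G p E \<Longrightarrow> c \<in> RSigma p \<Longrightarrow> c * a \<in> I_G p E"
  unfolding I_G_eq RSigma_eq_vars_upto by (rule ideal_gen_mult)

lemma I_G_zero: "0 \<in> I_G p E"
  unfolding I_G_eq by (rule ideal_gen_zero)

lemma cond_minor_in_I_G:
  "1 \<le> i \<Longrightarrow> i < j \<Longrightarrow> j \<le> p \<Longrightarrow> (i, j) \<notin> E \<Longrightarrow> cond_minor i j (pa E j) \<in> I_G p E"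
  unfolding I_G_eq by (rule ideal_gen_generator) blast

lemma pa_minor_in_vars_upto: "i \<le> Suc n \<Longrightarrow> pa_minor i \<in> polys_in (vars_upto n)"
  unfolding pa_minor_def
proof (rule detl_in_polys_in)
  fix x y assume "i \<le> Suc n" "x \<in> set (pa E i)" "y \<in> set (pa E i)"
  then have "1 \<le> min x y" "min x y \<le> max x y" "max x y \<le> n"
    unfolding set_pa using edge_bounds by force+
  then show "sym_var x y \<in> vars_upto n"
    unfolding sym_var_def vars_upto_def by simp
qed simp

lemma S_upto_Suc_subset_vars_upto: "S_upto (Suc n) \<subseteq> polys_in (vars_upto n)"
proof
  fix s assume "s \<in> S_upto (Suc n)"
  then obtain k where k: "\<forall>i. Suc n < i \<longrightarrow> k i = 0" and s: "s = (\<Prod>i\<in>{1..p}. pa_minor i ^ k i)"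
    unfolding S_upto_def by blast
  have "pa_minor i ^ k i \<in> polys_in (vars_upto n)" for i
    by (cases "Suc n < i") (simp_all add: k polys_in_power pa_minor_in_vars_upto)
  then show "s \<in> polys_in (vars_upto n)"
    unfolding s by (rule polys_in_prod)
qed

lemma one_in_S_upto: "1 \<in> S_upto n"
  unfolding S_upto_def by (rule CollectI, rule exI[of _ "\<lambda>_. 0"]) simp

lemma S_upto_mult: "s \<in> S_upto n \<Longrightarrow> t \<in> S_upto n \<Longrightarrow> s * t \<in> S_upto n"
proof -
  assume "s \<in> S_upto n" "t \<in> S_upto n"
  then obtain k1 k2 where k: "\<forall>i. n < i \<longrightarrow> k1 i = 0" "\<forall>i. n < i \<longrightarrow> k2 i = 0"
    and st: "s = (\<Prod>i\<in>{1..p}. pa_minor i ^ k1 i)" "t = (\<Prod>i\<in>{1..p}. pa_minor i ^ k2 i)"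
    unfolding S_upto_def by blast
  then have "s * t = (\<Prod>i\<in>{1..p}. pa_minor i ^ (k1 i + k2 i))"
    by (simp add: power_add prod.distrib)
  with k show ?thesis
    unfolding S_upto_def by (intro CollectI exI[of _ "\<lambda>i. k1 i + k2 i"]) auto
qed

lemma S_upto_mono: "m \<le> n \<Longrightarrow> S_upto m \<subseteq> S_upto n"
  unfolding S_upto_def by fastforce

lemma S_upto_subset_RSigma: "n \<le> p \<Longrightarrow> S_upto n \<subseteq> RSigma p"
  using S_upto_mono[of n "Suc n"] S_upto_Suc_subset_vars_upto[of n] vars_upto_subset_RSigma[of n]
  by auto

lemma pa_minor_in_S_upto: "1 \<le> i \<Longrightarrow> i \<le> p \<Longrightarrow> pa_minor i \<in> S_upto i"
proof -
  assume "1 \<le> i" "i \<le> p"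
  then have "(\<Prod>x\<in>{1..p}. pa_minor x ^ (if x = i then 1 else 0)) = pa_minor i"
    by (simp add: if_distrib cong: if_cong)
  then show ?thesis
    unfolding S_upto_def by (intro CollectI exI[of _ "\<lambda>x. if x = i then 1 else 0"]) auto
qed

lemma S_upto_subset_S_G: "S_upto n \<subseteq> S_G p E"
  unfolding S_upto_def S_G_def pa_minor_def by blast

lemma jointly_reducible_singleton:
  "jointly_reducible n {f} \<longleftrightarrow> (\<exists>s\<in>S_upto n. \<exists>h\<in>RSigmaE p E. s * f - h \<in> I_G p E)"
  unfolding jointly_reducible_def by simp

lemma jointly_reducible_RSigmaE: "h \<in> RSigmaE p E \<Longrightarrow> jointly_reducible n {h}"
  unfolding jointly_reducible_singleton using one_in_S_upto I_G_zero by force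

lemma jointly_reducible_mono:
  "m \<le> n \<Longrightarrow> jointly_reducible m F \<Longrightarrow> jointly_reducible n F"
  unfolding jointly_reducible_def using S_upto_mono by blast

lemma cond_minor_new_var:
  assumes "1 \<le> a" "a < Suc n" "Suc n \<le> p" "(a, Suc n) \<notin> E"
  shows "\<exists>R\<in>polys_in (vars_upto n). pa_minor (Suc n) * sigma a (Suc n) + R \<in> I_G p E"
proof -
  define K where "K = pa E (Suc n)"
  obtain R where R: "cond_minor a (Suc n) K = sigma a (Suc n) * detl K K + R"
    and R_vars: "R \<in> polys_in ({sym_var a k | k. k \<in> set K} \<union>
                              {sym_var k c | k c. k \<in> set K \<and> c \<in> set (Suc n # K)})"
    using cond_minor_expansion by blast
  have K: "1 \<le> k \<and> k < Suc n \<and> (k, Suc n) \<in> E" if "k \<in> set K" for k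
    using that edge_bounds unfolding K_def set_pa by auto
  have "{sym_var a k | k. k \<in> set K} \<union> {sym_var k c | k c. k \<in> set K \<and> c \<in> set (Suc n # K)}
      \<subseteq> vars_upto n"
    using assms(1,2) K unfolding vars_upto_def sym_var_def
    by (fastforce simp: min_def max_def)
  with R_vars have "R \<in> polys_in (vars_upto n)"
    using polys_in_mono by blast
  moreover have "cond_minor a (Suc n) K \<in> I_G p E"
    unfolding K_def using cond_minor_in_I_G assms by blast
  ultimately show ?thesis
    using R unfolding K_def pa_minor_def by (metis mult.commute)
qed

context
  fixes n :: nat
  assumes level: "Suc n \<le> p"
    and IH: "\<And>F. finite F \<Longrightarrow> F \<subseteq> polys_in (vars_upto n) \<Longrightarrow> jointly_reducible n F"
begin

lemma reducible_IH:
  "g \<in> polys_in (vars_upto n) \<Longrightarrow> \<exists>t\<in>S_upto n. \<exists>k\<in>RSigmaE p E. t * g - k \<in> I_G p E"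
  using IH[of "{g}"] unfolding jointly_reducible_singleton by simp

lemma S_upto_Suc_subset_RSigma: "S_upto (Suc n) \<subseteq> RSigma p"
  using S_upto_subset_RSigma level by blast

lemma reducible_var:
  assumes "v \<in> vars_upto (Suc n)"
  shows "jointly_reducible (Suc n) {pvar v}"
proof -
  obtain a b where v: "v = (a, b)" by force
  have "v \<in> vars_upto 0 \<or> v \<in> vars_upto n \<or> (1 \<le> a \<and> a < Suc n \<and> b = Suc n \<and> v \<notin> E)"
    using assms level unfolding v vars_upto_def by auto
  then consider "v \<in> vars_upto 0" | "v \<in> vars_upto n" | "1 \<le> a" "a < Suc n" "b = Suc n" "v \<notin> E"
    by blast
  then show ?thesis
  proof cases
    case 1
    then show ?thesis
      by (intro jointly_reducible_RSigmaE) (simp add: RSigmaE_eq_vars_upto_0 polys_in_pvar)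
  next
    case 2
    then have "jointly_reducible n {pvar v}"
      by (intro IH) (auto intro: polys_in_pvar)
    then show ?thesis
      by (rule jointly_reducible_mono[rotated]) simp
  next
    case 3
    then obtain R where R: "R \<in> polys_in (vars_upto n)"
      and gen: "pa_minor (Suc n) * sigma a (Suc n) + R \<in> I_G p E"
      using cond_minor_new_var level unfolding v by blast
    obtain t k where t: "t \<in> S_upto n" and k: "k \<in> RSigmaE p E" and tk: "t * R - k \<in> I_G p E"
      using reducible_IH[OF R] by blast
    have "t * pa_minor (Suc n) * pvar v - (- k) =
        t * (pa_minor (Suc n) * sigma a (Suc n) + R) - (t * R - k)"
      using 3 unfolding v sigma_def by (simp add: algebra_simps)
    also have "\<dots> \<in> I_G p E"
      using t S_upto_Suc_subset_RSigma S_upto_mono[of n "Suc n"]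
      by (intro I_G_diff I_G_mult gen tk) auto
    finally have "t * pa_minor (Suc n) * pvar v - (- k) \<in> I_G p E" .
    moreover have "t * pa_minor (Suc n) \<in> S_upto (Suc n)"
      using t S_upto_mono[of n "Suc n"] pa_minor_in_S_upto[of "Suc n"] level
      by (intro S_upto_mult) auto
    moreover have "- k \<in> RSigmaE p E"
      using k unfolding RSigmaE_eq_vars_upto_0 by (rule polys_in_uminus)
    ultimately show ?thesis
      unfolding jointly_reducible_singleton by blast
  qed
qed

text \<open>The cross terms s2 * h1 + s1 * h2 are of level n, so the induction hypothesis
  reduces them once more.\<close>

lemma reducible_add:
  assumes "jointly_reducible (Suc n) {x}" "jointly_reducible (Suc n) {y}"
  shows "jointly_reducible (Suc n) {x + y}"
proof -
  obtain s1 h1 where s1: "s1 \<in> S_upto (Suc n)" "h1 \<in> RSigmaE p E" "s1 * x - h1 \<in> I_G p E"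
    using assms(1) unfolding jointly_reducible_singleton by blast
  obtain s2 h2 where s2: "s2 \<in> S_upto (Suc n)" "h2 \<in> RSigmaE p E" "s2 * y - h2 \<in> I_G p E"
    using assms(2) unfolding jointly_reducible_singleton by blast
  have "s2 * h1 + s1 * h2 \<in> polys_in (vars_upto n)"
    using s1 s2 S_upto_Suc_subset_vars_upto RSigmaE_subset_vars_upto
    by (blast intro: polys_in_add polys_in_mult)
  then obtain t k where t: "t \<in> S_upto n" and k: "k \<in> RSigmaE p E"
    and tk: "t * (s2 * h1 + s1 * h2) - k \<in> I_G p E"
    using reducible_IH by blast
  have t': "t \<in> S_upto (Suc n)"
    using t S_upto_mono[of n "Suc n"] by auto
  have "(t * s1 * s2) * (x + y) - k =
      (t * s2) * (s1 * x - h1) + (t * s1) * (s2 * y - h2) + (t * (s2 * h1 + s1 * h2) - k)"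
    by (simp add: algebra_simps)
  also have "\<dots> \<in> I_G p E"
    using s1 s2 t' S_upto_Suc_subset_RSigma S_upto_mult
    by (intro I_G_add I_G_mult tk) (auto simp: RSigma_eq_vars_upto intro: polys_in_mult)
  finally show ?thesis
    unfolding jointly_reducible_singleton using k t' s1 s2 S_upto_mult by meson
qed

lemma reducible_mult:
  assumes "jointly_reducible (Suc n) {x}" "jointly_reducible (Suc n) {y}"
    and y: "y \<in> RSigma p"
  shows "jointly_reducible (Suc n) {x * y}"
proof -
  obtain s1 h1 where s1: "s1 \<in> S_upto (Suc n)" "h1 \<in> RSigmaE p E" "s1 * x - h1 \<in> I_G p E"
    using assms(1) unfolding jointly_reducible_singleton by blast
  obtain s2 h2 where s2: "s2 \<in> S_upto (Suc n)" "h2 \<in> RSigmaE p E" "s2 * y - h2 \<in> I_G p E"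
    using assms(2) unfolding jointly_reducible_singleton by blast
  have "(s1 * s2) * (x * y) - h1 * h2 = (s2 * y) * (s1 * x - h1) + h1 * (s2 * y - h2)"
    by (simp add: algebra_simps)
  also have "\<dots> \<in> I_G p E"
    using s1 s2 y S_upto_Suc_subset_RSigma RSigmaE_subset_vars_upto[of p]
    by (intro I_G_add I_G_mult) (auto simp: RSigma_eq_vars_upto intro: polys_in_mult)
  finally have "(s1 * s2) * (x * y) - h1 * h2 \<in> I_G p E" .
  moreover have "h1 * h2 \<in> RSigmaE p E"
    using s1(2) s2(2) unfolding RSigmaE_eq_vars_upto_0 by (rule polys_in_mult)
  ultimately show ?thesis
    unfolding jointly_reducible_singleton using s1(1) s2(1) S_upto_mult by blast
qed

lemma reducible_Suc: "f \<in> polys_in (vars_upto (Suc n)) \<Longrightarrow> jointly_reducible (Suc n) {f}"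
proof (induct f rule: polys_in_induct)
  case (const c)
  then show ?case
    by (intro jointly_reducible_RSigmaE) (simp add: RSigmaE_eq_vars_upto_0)
next
  case (var v)
  then show ?case by (rule reducible_var)
next
  case (add x y)
  show ?case by (rule reducible_add[OF add(1,2)])
next
  case (mult x y)
  show ?case
    using mult(4) vars_upto_subset_RSigma[OF level] by (blast intro: reducible_mult[OF mult(1,2)])
qed

text \<open>Combining the multiplier s of F with the multiplier s' of f creates the cross terms
  s' H(g) and s h', which are of level n because multipliers of level n+1 are.\<close>

lemma jointly_reducible_Suc:
  "finite F \<Longrightarrow> F \<subseteq> polys_in (vars_upto (Suc n)) \<Longrightarrow> jointly_reducible (Suc n) F"
proof (induct F rule: finite_induct)
  case empty
  then show ?case
    unfolding jointly_reducible_def using one_in_S_upto by blast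
next
  case (insert f F)
  obtain s where s: "s \<in> S_upto (Suc n)"
    and sF: "\<forall>g\<in>F. \<exists>h\<in>RSigmaE p E. s * g - h \<in> I_G p E"
    using insert unfolding jointly_reducible_def by auto
  obtain H where H: "\<forall>g\<in>F. H g \<in> RSigmaE p E \<and> s * g - H g \<in> I_G p E"
    using bchoice[of F "\<lambda>g h. h \<in> RSigmaE p E \<and> s * g - h \<in> I_G p E"] sF by blast
  obtain s' h' where s': "s' \<in> S_upto (Suc n)" "h' \<in> RSigmaE p E" "s' * f - h' \<in> I_G p E"
    using reducible_Suc insert unfolding jointly_reducible_singleton by blast
  define G where "G = (\<lambda>g. s' * H g) ` F \<union> {s * h'}"
  have "G \<subseteq> polys_in (vars_upto n)"
    unfolding G_def using H s s' RSigmaE_subset_vars_upto[of n] S_upto_Suc_subset_vars_upto[of n]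
    by (blast intro: polys_in_mult)
  with insert(1) have "jointly_reducible n G"
    unfolding G_def by (intro IH) auto
  then obtain t where t: "t \<in> S_upto n" and tG: "\<forall>x\<in>G. \<exists>k\<in>RSigmaE p E. t * x - k \<in> I_G p E"
    unfolding jointly_reducible_def by blast
  have t': "t \<in> S_upto (Suc n)"
    using t S_upto_mono[of n "Suc n"] by auto
  have R: "t * s \<in> RSigma p" "t * s' \<in> RSigma p"
    using S_upto_Suc_subset_RSigma t' s s'(1) S_upto_mult by auto
  have "\<exists>k\<in>RSigmaE p E. (t * s * s') * g - k \<in> I_G p E" if "g \<in> insert f F" for g
  proof (cases "g = f")
    case True
    obtain k where k: "k \<in> RSigmaE p E" "t * (s * h') - k \<in> I_G p E"
      using tG unfolding G_def by auto
    have "(t * s * s') * g - k = (t * s) * (s' * f - h') + (t * (s * h') - k)"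
      using True by (simp add: algebra_simps)
    also have "\<dots> \<in> I_G p E"
      using R s' k by (intro I_G_add I_G_mult) auto
    finally show ?thesis using k by blast
  next
    case False
    with that have g: "g \<in> F" by simp
    obtain k where k: "k \<in> RSigmaE p E" "t * (s' * H g) - k \<in> I_G p E"
      using tG g unfolding G_def by auto
    have "(t * s * s') * g - k = (t * s') * (s * g - H g) + (t * (s' * H g) - k)"
      by (simp add: algebra_simps)
    also have "\<dots> \<in> I_G p E"
      using R H g k by (intro I_G_add I_G_mult) auto
    finally show ?thesis using k by blast
  qed
  moreover have "t * s * s' \<in> S_upto (Suc n)"
    by (intro S_upto_mult t' s s')
  ultimately show ?case
    unfolding jointly_reducible_def by blast
qed

end

lemma jointly_reducible_all:
  "n \<le> p \<Longrightarrow> finite F \<Longrightarrow> F \<subseteq> polys_in (vars_upto n) \<Longrightarrow> jointly_reducible n F"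
proof (induct n arbitrary: F)
  case 0
  then have "\<forall>f\<in>F. f \<in> RSigmaE p E \<and> 1 * f - f \<in> I_G p E"
    using I_G_zero unfolding RSigmaE_eq_vars_upto_0 by auto
  then show ?case
    unfolding jointly_reducible_def using one_in_S_upto by blast
next
  case (Suc n)
  then show ?case
    using jointly_reducible_Suc[of n] by simp
qed

end

theorem mainTheorem9:
  fixes p :: nat and E :: "(nat \<times> nat) set" and f :: "nat \<Rightarrow> rpoly" and r :: nat
  assumes "naturally_ordered_dag p E"
    and "\<forall>l\<in>{1..r}. f l \<in> RSigma p"
  shows "\<exists>s\<in>S_G p E. \<exists>h. (\<forall>l\<in>{1..r}. h l \<in> RSigmaE p E \<and> s * f l - h l \<in> I_G p E)"
proof -
  interpret natural_dag p E using assms(1) by unfold_locales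
  have "jointly_reducible p (f ` {1..r})"
    using assms(2) by (intro jointly_reducible_all) (auto simp: RSigma_eq_vars_upto)
  then obtain s where s: "s \<in> S_upto p"
    and sh: "\<forall>l\<in>{1..r}. \<exists>h\<in>RSigmaE p E. s * f l - h \<in> I_G p E"
    unfolding jointly_reducible_def by auto
  obtain h where "\<forall>l\<in>{1..r}. h l \<in> RSigmaE p E \<and> s * f l - h l \<in> I_G p E"
    using bchoice[of "{1..r}" "\<lambda>l h. h \<in> RSigmaE p E \<and> s * f l - h \<in> I_G p E"] sh by blast
  then show ?thesis
    using s S_upto_subset_S_G by blast
qed

end
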